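(* Consider the optical channel with a direct-detection receiver: the input is a coherent state $|S\rangle$ with random amplitude $S\in\mathbb{C}$ subject to $\mathbb{E}[|S|^2]\le\mathcal{E}$, and the output is the photon count, which given $S$ is Poisson distributed with mean $|S|^2$. Let $C_{\sf DD}(\mathcal{E})$ be its capacity (in nats per channel use). As $\mathcal{E}\to0$, the optimal input distribution is on-off keying, $$|S\rangle=\begin{cases}|0\rangle&\text{with probability }1-p^*,\\ |\sqrt{\mathcal{E}/p^*}\rangle&\text{with probability }p^*,\end{cases}\qquad\text{with}\quad \lim_{\mathcal{E}\to0}\frac{p^*}{\frac{\mathcal{E}}{2}\log\frac{1}{\mathcal{E}}}=1,$$ and $$C_{\sf DD}(\mathcal{E})=\mathcal{E}\log\frac1{\mathcal{E}}-\mathcal{E}\log\log\frac1{\mathcal{E}}+O(\mathcal{E}).$$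
   Context: $\log$ is the natural logarithm. $O(\mathcal{E})$ denotes a function $f(\mathcal{E})$ with $\limsup_{\mathcal{E}\to0}|f(\mathcal{E})/\mathcal{E}|<\infty$. *)

theory Defs
  imports "HOL-Probability.Probability" "HOL-Library.Landau_Symbols"
begin

definition poi :: "real \<Rightarrow> nat \<Rightarrow> real" where
  "poi l k = exp (- l) * l ^ k / fact k"

definition out_pmf :: "complex measure \<Rightarrow> nat \<Rightarrow> real" where
  "out_pmf M k = (\<integral>s. poi ((cmod s)\<^sup>2) k \<partial>M)"

definition div_term :: "real \<Rightarrow> real \<Rightarrow> real" where
  "div_term p q = (if p = 0 then 0 else p * ln (p / q))"

text \<open>Mutual information I(S;Y) in nats: E_S[ D(P_{Y|S} || P_Y) ].\<close>
definition info :: "complex measure \<Rightarrow> real" where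
  "info M = (\<integral>s. (\<Sum>k. div_term (poi ((cmod s)\<^sup>2) k) (out_pmf M k)) \<partial>M)"

definition admissible :: "real \<Rightarrow> complex measure \<Rightarrow> bool" where
  "admissible E M \<longleftrightarrow> prob_space M \<and> sets M = sets borel \<and>
     integrable M (\<lambda>s. (cmod s)\<^sup>2) \<and> (\<integral>s. (cmod s)\<^sup>2 \<partial>M) \<le> E"

definition C_DD :: "real \<Rightarrow> real" where
  "C_DD E = Sup (info ` {M. admissible E M})"

definition ook :: "real \<Rightarrow> real \<Rightarrow> complex pmf" where
  "ook E p = map_pmf (\<lambda>b. if b then complex_of_real (sqrt (E / p)) else 0) (bernoulli_pmf p)"

end

theory Submission
  imports Defs
begin

text \<open>
  Upper bound: for every reference output law \<open>Q\<close>, \<open>I(S;Y) \<le> E\<^sub>S[D(Poi(\<bar>S\<bar>\<^sup>2) \<parallel> Q)]\<close>.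
  Taking \<open>Q(0) = 1 - E\<close> and \<open>Q(k) = E 2\<^sup>-\<^sup>k\<close> for \<open>k \<ge> 1\<close>, the divergence from a Poisson law of
  mean \<open>l\<close> is at most \<open>2E + l (ln (1/E) - ln ln (1/E) + 1 + ln 2)\<close>, which is linear in \<open>l\<close>;
  averaging under the energy constraint bounds the capacity by
  \<open>E ln (1/E) - E ln ln (1/E) + O(E)\<close>.
  Lower bound: on-off keying with \<open>p = (E/2) ln (1/E)\<close> sends pulses of energy \<open>2 / ln (1/E)\<close>,
  detected with probability about \<open>E/p\<close>, and each detection is worth \<open>ln (1/p)\<close> nats;
  this gives \<open>E ln (1/E) - E ln ln (1/E) - 2E\<close>.
\<close>

section \<open>Poisson probabilities and elementary inequalities\<close>

lemma poi_nonneg: "0 \<le> l \<Longrightarrow> 0 \<le> poi l k"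
  unfolding poi_def by simp

lemma poi_pos: "0 < l \<Longrightarrow> 0 < poi l k"
  unfolding poi_def by simp

lemma poi_0_left: "poi 0 k = (if k = 0 then 1 else 0)"
  unfolding poi_def by simp

lemma poi_Suc: "poi l (Suc k) = l * poi l k / Suc k"
  unfolding poi_def by (simp add: field_simps)

lemma sums_poi: "(\<lambda>k. poi l k) sums 1"
proof -
  have "(\<lambda>k. exp (-l) * (l ^ k / fact k)) sums (exp (-l) * exp l)"
    using exp_converges[of l] by (intro sums_mult) (simp add: divide_inverse_commute)
  then show ?thesis
    unfolding poi_def[abs_def] by (simp add: exp_minus)
qed

lemma sums_poi_Suc: "(\<lambda>k. poi l (Suc k)) sums (1 - exp (-l))"
  using sums_poi[of l] by (subst sums_Suc_iff) (simp add: poi_def[of l 0])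

lemma sums_Suc_mult_poi_Suc: "(\<lambda>k. real (Suc k) * poi l (Suc k)) sums l"
  using sums_mult[OF sums_poi, of l] by (simp add: poi_Suc)

lemma poi_le_one_minus_exp:
  assumes "0 \<le> l" "k \<noteq> 0"
  shows "poi l k \<le> 1 - exp (-l)"
proof -
  have "sum (poi l) {0, k} \<le> suminf (poi l)"
    using sums_poi[of l] assms by (intro sum_le_suminf) (auto simp: sums_iff poi_nonneg)
  then show ?thesis
    using sums_poi[of l] assms by (simp add: sums_iff poi_def[of l 0])
qed

lemma ln_inverse_ge:
  fixes a E :: real
  assumes "0 < E" "E \<le> exp (- a)"
  shows "a \<le> ln (1 / E)"
proof -
  have "E * exp a \<le> exp (- a) * exp a"
    using assms(2) by (intro mult_right_mono) auto
  then have "exp a \<le> 1 / E"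
    using assms by (simp add: exp_minus field_simps)
  then show ?thesis
    using assms by (simp add: ln_ge_iff)
qed

lemma one_minus_exp_ge:
  fixes A :: real
  assumes "0 \<le> A"
  shows "A - A\<^sup>2 / 2 \<le> 1 - exp (- A)"
proof -
  let ?f = "\<lambda>x::real. 1 - exp (- x) - x + x\<^sup>2 / 2"
  have "?f 0 \<le> ?f A"
  proof (rule DERIV_nonneg_imp_increasing_open[OF assms])
    fix x :: real
    have "(?f has_real_derivative (exp (- x) - 1 + x)) (at x)"
      by (auto intro!: derivative_eq_intros simp: power2_eq_square field_simps)
    moreover have "0 \<le> exp (- x) - 1 + x"
      using exp_ge_add_one_self[of "- x"] by simp
    ultimately show "\<exists>y. (?f has_real_derivative y) (at x) \<and> 0 \<le> y"
      by blast
  qed (intro continuous_intros; simp)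
  then show ?thesis
    by simp
qed

lemma one_minus_exp_plus_square_le:
  fixes l :: real
  assumes "0 \<le> l"
  shows "(1 - exp (- l)) + (1 - exp (- l))\<^sup>2 / 2 \<le> l"
proof -
  let ?f = "\<lambda>x::real. x - (1 - exp (- x)) - (1 - exp (- x))\<^sup>2 / 2"
  have "?f 0 \<le> ?f l"
  proof (rule DERIV_nonneg_imp_increasing_open[OF assms])
    fix x :: real
    have "(?f has_real_derivative (1 - exp (- x))\<^sup>2) (at x)"
      by (auto intro!: derivative_eq_intros simp: power2_eq_square field_simps)
    then show "\<exists>y. (?f has_real_derivative y) (at x) \<and> 0 \<le> y"
      by auto
  qed (intro continuous_intros; simp)
  then show ?thesis
    by simp
qed

lemma ln_le_one_plus_quarter:
  fixes x :: real
  assumes "0 < x"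
  shows "ln x \<le> 1 + x / 4"
proof -
  have "ln x - ln 4 \<le> x / 4 - 1"
    using ln_le_minus_one[of "x / 4"] assms by (simp add: ln_div)
  moreover have "ln (4::real) = 2 * ln 2"
    using ln_realpow[of 2 2] by simp
  ultimately show ?thesis
    using ln_2_less_1 by linarith
qed

text \<open>With \<open>u = 1 - e\<^sup>-\<^sup>l\<close>, the quadratic excess \<open>u\<^sup>2/2\<close> of \<open>l\<close> over \<open>u\<close> absorbs the error
  of \<open>ln u \<le> 1 + u L / 4 - ln L\<close>.\<close>
lemma one_minus_exp_ln_le:
  fixes L l :: real
  assumes L: "1 \<le> L" and l: "0 \<le> l"
  shows "(1 - exp (- l)) * ln (1 - exp (- l)) + (1 - exp (- l)) * L \<le> l * (L - ln L + 1)"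
proof (cases "l = 0")
  case False
  define u where "u = 1 - exp (- l)"
  define b where "b = L - ln L + 1"
  have u: "0 < u"
    using False l by (simp add: u_def)
  have "ln 2 + ln L \<le> 1 + L / 2"
    using ln_le_one_plus_quarter[of "2 * L"] L by (simp add: ln_mult)
  moreover have "0 < ln (2::real)"
    by simp
  ultimately have "L / 2 \<le> b"
    unfolding b_def by linarith
  have "ln u \<le> 1 + u * L / 4 - ln L"
    using ln_le_one_plus_quarter[of "u * L"] u L by (simp add: ln_mult)
  then have "u * ln u + u * L \<le> u * (1 + u * L / 4 - ln L) + u * L"
    using u by (simp add: mult_left_mono)
  also have "\<dots> = u * b + u\<^sup>2 * (L / 4)"
    by (simp add: b_def power2_eq_square algebra_simps)
  also have "\<dots> \<le> u * b + u\<^sup>2 * (b / 2)"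
    using \<open>L / 2 \<le> b\<close> by (intro add_left_mono mult_left_mono) auto
  also have "\<dots> = (u + u\<^sup>2 / 2) * b"
    by (simp add: algebra_simps)
  also have "\<dots> \<le> l * b"
    using one_minus_exp_plus_square_le[OF l] \<open>L / 2 \<le> b\<close> L
    by (intro mult_right_mono) (auto simp: u_def)
  finally show ?thesis
    by (simp add: u_def b_def)
qed simp

section \<open>Relative entropy and the duality bound\<close>

lemma le_one_if_sums_one:
  fixes f :: "nat \<Rightarrow> real"
  assumes "f sums 1" "\<And>k. 0 \<le> f k"
  shows "f k \<le> 1"
proof -
  have "sum f {k} \<le> suminf f"
    using assms by (intro sum_le_suminf) (auto simp: sums_iff)
  then show ?thesis
    using assms(1) by (simp add: sums_iff)
qed

text \<open>Shifting the summand of \<open>D(p\<parallel>q)\<close> by \<open>q - p\<close> makes it nonnegative, and does not change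
  the sum when \<open>p\<close> and \<open>q\<close> are both probability vectors.\<close>
definition kl_term :: "real \<Rightarrow> real \<Rightarrow> real" where
  "kl_term p q = div_term p q - p + q"

lemma kl_term_nonneg:
  assumes "0 \<le> p" "0 < q"
  shows "0 \<le> kl_term p q"
proof (cases "p = 0")
  case False
  with assms have p: "0 < p"
    by simp
  have "p * ln (q / p) \<le> p * (q / p - 1)"
    using p assms by (intro mult_left_mono ln_le_minus_one) auto
  moreover have "p * (q / p - 1) = q - p"
    using p by (simp add: field_simps)
  moreover have "ln (p / q) = - ln (q / p)"
    using p assms by (simp add: ln_div)
  ultimately show ?thesis
    using p by (simp add: kl_term_def div_term_def)
qed (use assms in \<open>simp add: kl_term_def div_term_def\<close>)

lemma kl_term_le:
  assumes "0 \<le> p" "p \<le> 1" "0 < q"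
  shows "kl_term p q \<le> \<bar>ln q\<bar> + q"
proof (cases "p = 0")
  case False
  with assms have p: "0 < p"
    by simp
  have "p * ln (p / q) = p * ln p - p * ln q"
    using p assms by (simp add: ln_div algebra_simps)
  also have "\<dots> \<le> p * \<bar>ln q\<bar>"
  proof -
    have "ln p \<le> 0"
      using p assms by simp
    then have "ln p - ln q \<le> \<bar>ln q\<bar>"
      by linarith
    then show ?thesis
      using p by (simp add: mult_left_mono flip: right_diff_distrib)
  qed
  also have "\<dots> \<le> \<bar>ln q\<bar>"
    using assms by (simp add: mult_left_le_one_le)
  finally show ?thesis
    using assms by (simp add: kl_term_def div_term_def)
qed (use assms in \<open>simp add: kl_term_def div_term_def\<close>)

lemma kl_term_change_reference:
  assumes "0 \<le> f" "0 < P" "0 < q"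
  shows "kl_term f P = kl_term f q + (f * ln (q / P) - q + P)"
proof (cases "f = 0")
  case False
  then have "ln (f / P) = ln (f / q) + ln (q / P)"
    using assms by (simp add: ln_div)
  then show ?thesis
    by (simp add: kl_term_def div_term_def algebra_simps)
qed (simp add: kl_term_def div_term_def)

lemma suminf_div_term_eq_suminf_kl_term:
  assumes "p sums 1" "q sums 1" "summable (\<lambda>k. kl_term (p k) (q k))"
  shows "(\<Sum>k. div_term (p k) (q k)) = (\<Sum>k. kl_term (p k) (q k))"
proof -
  have "(\<lambda>k. kl_term (p k) (q k) + p k - q k) sums ((\<Sum>k. kl_term (p k) (q k)) + 1 - 1)"
    using assms by (intro sums_diff sums_add summable_sums)
  then show ?thesis
    by (simp add: kl_term_def sums_iff)
qed

context prob_space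
begin

text \<open>The two averages differ exactly by \<open>kl_term P q \<ge> 0\<close>, where \<open>P = E[f]\<close>.\<close>
lemma nn_integral_kl_term_expectation_le:
  assumes [measurable]: "f \<in> borel_measurable M"
    and f_bounds: "\<And>s. 0 \<le> f s" "\<And>s. f s \<le> 1"
    and q: "0 < q"
  shows "(\<integral>\<^sup>+s. ennreal (kl_term (f s) (expectation f)) \<partial>M)
    \<le> (\<integral>\<^sup>+s. ennreal (kl_term (f s) q) \<partial>M)"
proof -
  define P where "P = expectation f"
  have int_f: "integrable M f"
    using f_bounds by (intro integrable_const_bound[of _ 1]) auto
  have "0 \<le> P"
    unfolding P_def using f_bounds by simp
  show ?thesis
  proof (cases "P = 0")
    case True
    then have "AE s in M. f s = 0"
      using integral_nonneg_eq_0_iff_AE[OF int_f] f_bounds by (auto simp: P_def)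
    then have "(\<integral>\<^sup>+s. ennreal (kl_term (f s) P) \<partial>M) = 0"
      using True by (subst nn_integral_0_iff_AE) (auto elim: AE_mp simp: kl_term_def div_term_def)
    then show ?thesis
      by (simp add: P_def)
  next
    case False
    with \<open>0 \<le> P\<close> have P: "0 < P"
      by simp
    define c where "c s = f s * ln (q / P) - q + P" for s
    have kl_eq: "kl_term (f s) P = kl_term (f s) q + c s" for s
      unfolding c_def using kl_term_change_reference f_bounds P q by blast
    have int_c: "integrable M c"
      unfolding c_def using int_f by auto
    have int_kl: "integrable M (\<lambda>s. kl_term (f s) q)"
    proof (rule integrable_const_bound[of _ "\<bar>ln q\<bar> + q"])
      show "AE s in M. norm (kl_term (f s) q) \<le> \<bar>ln q\<bar> + q"
        using kl_term_le kl_term_nonneg f_bounds q by auto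
    qed (simp add: kl_term_def div_term_def)
    have "integral\<^sup>L M c = P * ln (q / P) - q + P"
      unfolding c_def using int_f by (simp add: P_def prob_space)
    also have "\<dots> = - kl_term P q"
      using P q by (simp add: kl_term_def div_term_def ln_div algebra_simps)
    also have "\<dots> \<le> 0"
      using kl_term_nonneg[of P q] P q by simp
    finally have "(\<integral>s. kl_term (f s) P \<partial>M) \<le> (\<integral>s. kl_term (f s) q \<partial>M)"
      unfolding kl_eq using int_c int_kl by simp
    moreover have "integrable M (\<lambda>s. kl_term (f s) P)"
      unfolding kl_eq using int_c int_kl by simp
    moreover have "0 \<le> kl_term (f s) P" "0 \<le> kl_term (f s) q" for s
      using kl_term_nonneg f_bounds P q by auto
    ultimately show ?thesis
      using int_kl by (simp add: P_def[symmetric] nn_integral_eq_integral)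
  qed
qed

lemma AE_kl_term_expectation_nonneg:
  assumes "f \<in> borel_measurable M" "\<And>s. 0 \<le> f s" "\<And>s. f s \<le> 1"
  shows "AE s in M. 0 \<le> kl_term (f s) (expectation f)"
proof (cases "expectation f = 0")
  case True
  have "integrable M f"
    using assms by (intro integrable_const_bound[of _ 1]) auto
  then have "AE s in M. f s = 0"
    using integral_nonneg_eq_0_iff_AE True assms by auto
  then show ?thesis
    by eventually_elim (simp add: True kl_term_def div_term_def)
next
  case False
  then have "0 < expectation f"
    using assms by (simp add: order_less_le)
  then show ?thesis
    using kl_term_nonneg assms by auto
qed

lemma sums_expectation:
  fixes p :: "nat \<Rightarrow> 'a \<Rightarrow> real"
  assumes [measurable]: "\<And>k. p k \<in> borel_measurable M"
    and p_nonneg: "\<And>k s. 0 \<le> p k s" and p_sums: "\<And>s. (\<lambda>k. p k s) sums 1"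
  shows "(\<lambda>k. expectation (p k)) sums 1"
proof -
  have p_le_1: "p k s \<le> 1" for k s
    using le_one_if_sums_one[of "\<lambda>k. p k s"] p_sums p_nonneg by blast
  have "(\<Sum>k. ennreal (expectation (p k))) = (\<Sum>k. \<integral>\<^sup>+s. ennreal (p k s) \<partial>M)"
    using p_nonneg p_le_1
    by (subst nn_integral_eq_integral) (auto intro!: integrable_const_bound[of _ 1])
  also have "\<dots> = (\<integral>\<^sup>+s. (\<Sum>k. ennreal (p k s)) \<partial>M)"
    by (rule nn_integral_suminf[symmetric]) measurable
  also have "\<dots> = 1"
    using p_sums p_nonneg by (simp add: suminf_ennreal2 sums_iff emeasure_space_1)
  finally have "(\<lambda>k. ennreal (expectation (p k))) sums ennreal 1"
    by (metis ennreal_1 summableI summable_sums)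
  then show ?thesis
    using p_nonneg by (subst (asm) sums_ennreal) auto
qed

text \<open>The duality bound \<open>I(S;Y) \<le> E\<^sub>S[D(P\<^sub>Y\<^sub>|\<^sub>S \<parallel> Q)]\<close> for an arbitrary reference law \<open>Q\<close>.\<close>
lemma expectation_suminf_div_term_le:
  fixes p :: "nat \<Rightarrow> 'a \<Rightarrow> real" and Q :: "nat \<Rightarrow> real"
  assumes [measurable]: "\<And>k. p k \<in> borel_measurable M"
    and p_nonneg: "\<And>k s. 0 \<le> p k s" and p_sums: "\<And>s. (\<lambda>k. p k s) sums 1"
    and Q_pos: "\<And>k. 0 < Q k"
    and bound: "(\<integral>\<^sup>+s. (\<Sum>k. ennreal (kl_term (p k s) (Q k))) \<partial>M) \<le> ennreal B"
    and "0 \<le> B"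
  shows "expectation (\<lambda>s. \<Sum>k. div_term (p k s) (expectation (p k))) \<le> B"
proof -
  define P where "P k = expectation (p k)" for k
  have p_le_1: "p k s \<le> 1" for k s
    using le_one_if_sums_one[of "\<lambda>k. p k s"] p_sums p_nonneg by blast
  have [measurable]: "(\<lambda>s. kl_term (p k s) c) \<in> borel_measurable M" for k c
    unfolding kl_term_def div_term_def by measurable
  have P_sums: "P sums 1"
    unfolding P_def by (rule sums_expectation) (use p_nonneg p_sums in auto)
  have kl_nonneg: "AE s in M. \<forall>k. 0 \<le> kl_term (p k s) (P k)"
    unfolding AE_all_countable P_def
    using AE_kl_term_expectation_nonneg p_nonneg p_le_1 by simp
  have "(\<integral>\<^sup>+s. (\<Sum>k. ennreal (kl_term (p k s) (P k))) \<partial>M)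
      = (\<Sum>k. \<integral>\<^sup>+s. ennreal (kl_term (p k s) (P k)) \<partial>M)"
    by (rule nn_integral_suminf) measurable
  also have "\<dots> \<le> (\<Sum>k. \<integral>\<^sup>+s. ennreal (kl_term (p k s) (Q k)) \<partial>M)"
    unfolding P_def using nn_integral_kl_term_expectation_le p_nonneg p_le_1 Q_pos
    by (intro suminf_le) auto
  also have "\<dots> = (\<integral>\<^sup>+s. (\<Sum>k. ennreal (kl_term (p k s) (Q k))) \<partial>M)"
    by (rule nn_integral_suminf[symmetric]) measurable
  finally have nn_le: "(\<integral>\<^sup>+s. (\<Sum>k. ennreal (kl_term (p k s) (P k))) \<partial>M) \<le> ennreal B"
    using bound by (rule order_trans)
  have "AE s in M. (\<Sum>k. ennreal (kl_term (p k s) (P k))) \<noteq> \<infinity>"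
    by (rule nn_integral_PInf_AE) (use nn_le in \<open>auto simp: top_unique\<close>)
  with kl_nonneg have series: "AE s in M.
      (\<Sum>k. div_term (p k s) (P k)) = (\<Sum>k. kl_term (p k s) (P k)) \<and>
      ennreal (\<Sum>k. kl_term (p k s) (P k)) = (\<Sum>k. ennreal (kl_term (p k s) (P k))) \<and>
      0 \<le> (\<Sum>k. kl_term (p k s) (P k))"
  proof eventually_elim
    case (elim s)
    then have "summable (\<lambda>k. kl_term (p k s) (P k))"
      by (intro summable_suminf_not_top) auto
    then show ?case
      using elim suminf_div_term_eq_suminf_kl_term[OF p_sums P_sums]
      by (auto simp: suminf_nonneg suminf_ennreal2)
  qed
  show ?thesis
  proof (cases "integrable M (\<lambda>s. \<Sum>k. div_term (p k s) (P k))")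
    case True
    have "ennreal (expectation (\<lambda>s. \<Sum>k. div_term (p k s) (P k)))
        = (\<integral>\<^sup>+s. ennreal (\<Sum>k. div_term (p k s) (P k)) \<partial>M)"
      using True series by (intro nn_integral_eq_integral[symmetric]) auto
    also have "\<dots> = (\<integral>\<^sup>+s. (\<Sum>k. ennreal (kl_term (p k s) (P k))) \<partial>M)"
      using series by (intro nn_integral_cong_AE) auto
    also have "\<dots> \<le> ennreal B"
      by (rule nn_le)
    finally show ?thesis
      using \<open>0 \<le> B\<close> by (simp add: P_def)
  next
    case False
    \<comment> \<open>then the Bochner integral is 0 by convention, which is why \<open>0 \<le> B\<close> is assumed\<close>
    then show ?thesis
      using \<open>0 \<le> B\<close> by (simp add: P_def not_integrable_integral_eq)
  qed
qed

end

section \<open>Upper bound on the capacity\<close>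

lemma exp_neg_one_le_half: "exp (- 1) \<le> (1 / 2 :: real)"
  using exp_ge_add_one_self[of 1] by (simp add: exp_minus field_simps)

text \<open>The weight \<open>E 2\<^sup>-\<^sup>k\<close> makes the cost \<open>ln (1 / Q(k)) = ln (1/E) + k ln 2\<close> of \<open>k \<ge> 1\<close> photons
  linear in \<open>k\<close>, hence the divergence bound linear in the mean photon number.\<close>
definition ref_out :: "real \<Rightarrow> nat \<Rightarrow> real" where
  "ref_out E k = (if k = 0 then 1 - E else E * (1 / 2) ^ k)"

lemma ref_out_pos: "0 < E \<Longrightarrow> E < 1 \<Longrightarrow> 0 < ref_out E k"
  by (simp add: ref_out_def)

lemma sums_ref_out: "ref_out E sums 1"
proof -
  have "(\<lambda>n. (E / 2) * (1 / 2 :: real) ^ n) sums ((E / 2) * (1 / (1 - 1 / 2)))"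
    by (intro sums_mult geometric_sums) auto
  then have "(\<lambda>n. ref_out E (Suc n)) sums E"
    by (simp add: ref_out_def)
  then show ?thesis
    by (subst (asm) sums_Suc_iff) (simp add: ref_out_def)
qed

lemma div_term_poi_ref_out_le:
  assumes E: "0 < E" "E < 1" and l: "0 \<le> l"
  shows "div_term (poi l k) (ref_out E k) \<le>
    (if k = 0 then exp (- l) * (- l - ln (1 - E))
     else poi l k * (ln (1 - exp (- l)) + ln (1 / E) + k * ln 2))"
proof (cases "k = 0")
  case True
  then show ?thesis
    using E by (simp add: div_term_def ref_out_def poi_def ln_div)
next
  case k: False
  show ?thesis
  proof (cases "poi l k = 0")
    case False
    then have p: "0 < poi l k"
      using poi_nonneg[OF l, of k] by simp
    have "ln (poi l k / ref_out E k) = ln (poi l k) + ln (1 / E) + k * ln 2"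
      using k p E by (simp add: ref_out_def ln_div ln_mult ln_realpow)
    moreover have "ln (poi l k) \<le> ln (1 - exp (- l))"
      using p poi_le_one_minus_exp[OF l k] by (simp add: ln_mono)
    ultimately show ?thesis
      using k p by (simp add: div_term_def mult_left_mono)
  qed (simp add: div_term_def k)
qed

lemma exp_neg_mult_ln_ratio_le:
  fixes l E :: real
  assumes l: "0 \<le> l" and E: "0 < E" "E \<le> 1 / 2"
  shows "exp (- l) * (- l - ln (1 - E)) \<le> 2 * E"
proof -
  have "- E - 2 * E\<^sup>2 \<le> ln (1 - E)"
    using E by (intro ln_one_minus_pos_lower_bound) auto
  moreover have "E * (2 * E) \<le> E * 1"
    using E by (intro mult_left_mono) auto
  ultimately have "- l - ln (1 - E) \<le> 2 * E"
    using l by (simp add: power2_eq_square)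
  then have "exp (- l) * (- l - ln (1 - E)) \<le> exp (- l) * (2 * E)"
    by (simp add: mult_left_mono)
  also have "\<dots> \<le> 2 * E"
    using l E by (simp add: mult_le_cancel_right1)
  finally show ?thesis .
qed

lemma suminf_kl_term_poi_ref_out_le:
  assumes E: "0 < E" "E \<le> exp (- 1)" and l: "0 \<le> l"
  shows "summable (\<lambda>k. kl_term (poi l k) (ref_out E k)) \<and>
    (\<Sum>k. kl_term (poi l k) (ref_out E k))
      \<le> 2 * E + l * (ln (1 / E) - ln (ln (1 / E)) + 1 + ln 2)"
proof -
  define L where "L = ln (1 / E)"
  define u where "u = 1 - exp (- l)"
  have L: "1 \<le> L"
    unfolding L_def using ln_inverse_ge[of E 1] E by simp
  have E_half: "E \<le> 1 / 2"
    using E exp_neg_one_le_half by linarith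
  define d where "d k = (if k = 0 then exp (- l) * (- l - ln (1 - E))
    else poi l k * (ln u + L + k * ln 2))" for k
  define D where "D = exp (- l) * (- l - ln (1 - E)) + (u * ln u + u * L) + l * ln 2"
  have "(\<lambda>n. poi l (Suc n) * (ln u + L) + real (Suc n) * poi l (Suc n) * ln 2)
      sums (u * (ln u + L) + l * ln 2)"
    unfolding u_def by (intro sums_add sums_mult2 sums_poi_Suc sums_Suc_mult_poi_Suc)
  then have "(\<lambda>n. d (Suc n)) sums (u * (ln u + L) + l * ln 2)"
    by (simp add: d_def algebra_simps)
  then have "d sums (u * (ln u + L) + l * ln 2 + d 0)"
    by (subst (asm) sums_Suc_iff)
  moreover have "u * (ln u + L) + l * ln 2 + d 0 = D"
    by (simp add: d_def D_def algebra_simps)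
  ultimately have "d sums D"
    by simp
  then have d_sums: "(\<lambda>k. d k - poi l k + ref_out E k) sums (D - 1 + 1)"
    by (intro sums_add sums_diff sums_poi sums_ref_out)
  have kl_le: "kl_term (poi l k) (ref_out E k) \<le> d k - poi l k + ref_out E k" for k
    using div_term_poi_ref_out_le[of E l k] E E_half l
    by (cases "k = 0") (simp_all add: kl_term_def d_def u_def L_def)
  have kl_nonneg: "0 \<le> kl_term (poi l k) (ref_out E k)" for k
    using E E_half l by (intro kl_term_nonneg poi_nonneg ref_out_pos) auto
  have summable: "summable (\<lambda>k. kl_term (poi l k) (ref_out E k))"
    using sums_summable[OF d_sums]
    by (rule summable_comparison_test') (simp add: kl_nonneg kl_le)
  then have "(\<Sum>k. kl_term (poi l k) (ref_out E k)) \<le> D"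
    using suminf_le[OF kl_le summable] d_sums by (simp add: sums_iff)
  moreover have "u * ln u + u * L \<le> l * (L - ln L + 1)"
    unfolding u_def using one_minus_exp_ln_le[OF L l] .
  moreover have "exp (- l) * (- l - ln (1 - E)) \<le> 2 * E"
    using exp_neg_mult_ln_ratio_le[OF l E(1) E_half] .
  ultimately show ?thesis
    using summable by (simp add: D_def L_def algebra_simps)
qed

lemma ln_ln_inverse_le:
  fixes E :: real
  assumes "0 < E" "E \<le> exp (- 1)"
  shows "ln (ln (1 / E)) \<le> ln (1 / E) - 1"
proof -
  have "1 \<le> ln (1 / E)"
    using ln_inverse_ge[of E 1] assms by simp
  then show ?thesis
    using ln_le_minus_one[of "ln (1 / E)"] by linarith
qed

lemma info_le_of_admissible:
  assumes adm: "admissible E M" and E: "0 < E" "E \<le> exp (- 1)"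
  shows "info M \<le> E * (ln (1 / E) - ln (ln (1 / E)) + 3 + ln 2)"
proof -
  interpret prob_space M
    using adm by (simp add: admissible_def)
  define K where "K = ln (1 / E) - ln (ln (1 / E)) + 1 + ln 2"
  have K: "0 \<le> K"
    unfolding K_def using ln_ln_inverse_le[OF E] ln_gt_zero[of 2] by simp
  have meas: "borel_measurable M = borel_measurable (borel :: complex measure)"
    using adm by (intro measurable_cong_sets) (auto simp: admissible_def)
  have int_energy: "integrable M (\<lambda>s. (cmod s)\<^sup>2)" "expectation (\<lambda>s. (cmod s)\<^sup>2) \<le> E"
    using adm by (auto simp: admissible_def)
  have "(\<integral>\<^sup>+s. (\<Sum>k. ennreal (kl_term (poi ((cmod s)\<^sup>2) k) (ref_out E k))) \<partial>M)
      \<le> (\<integral>\<^sup>+s. ennreal (2 * E + (cmod s)\<^sup>2 * K) \<partial>M)"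
  proof (intro nn_integral_mono)
    fix s
    have "summable (\<lambda>k. kl_term (poi ((cmod s)\<^sup>2) k) (ref_out E k))"
      "(\<Sum>k. kl_term (poi ((cmod s)\<^sup>2) k) (ref_out E k)) \<le> 2 * E + (cmod s)\<^sup>2 * K"
      using suminf_kl_term_poi_ref_out_le[OF E, of "(cmod s)\<^sup>2"] by (simp_all add: K_def)
    moreover have "0 \<le> kl_term (poi ((cmod s)\<^sup>2) k) (ref_out E k)" for k
      using E exp_neg_one_le_half by (intro kl_term_nonneg poi_nonneg ref_out_pos) auto
    ultimately show "(\<Sum>k. ennreal (kl_term (poi ((cmod s)\<^sup>2) k) (ref_out E k)))
        \<le> ennreal (2 * E + (cmod s)\<^sup>2 * K)"
      by (simp add: suminf_ennreal2 ennreal_leI)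
  qed
  also have "\<dots> = ennreal (2 * E + expectation (\<lambda>s. (cmod s)\<^sup>2) * K)"
    using int_energy E K by (subst nn_integral_eq_integral) (auto simp: prob_space)
  also have "\<dots> \<le> ennreal (2 * E + E * K)"
    using int_energy K by (intro ennreal_leI add_left_mono mult_right_mono) auto
  finally have "expectation (\<lambda>s. \<Sum>k. div_term (poi ((cmod s)\<^sup>2) k)
      (expectation (\<lambda>x. poi ((cmod x)\<^sup>2) k))) \<le> 2 * E + E * K"
    using E K exp_neg_one_le_half
    by (intro expectation_suminf_div_term_le[where Q = "ref_out E"] sums_poi poi_nonneg ref_out_pos)
      (auto simp: meas poi_def)
  then show ?thesis
    by (simp add: info_def out_pmf_def K_def algebra_simps)
qed

section \<open>On-off keying\<close>

lemma integral_ook: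
  assumes "0 < p" "p \<le> 1"
  shows "(\<integral>s. f s \<partial>measure_pmf (ook E p)) = p * f (complex_of_real (sqrt (E / p))) + (1 - p) * f 0"
  unfolding ook_def using assms by simp

lemma out_pmf_ook:
  assumes "0 < p" "p \<le> 1" "0 \<le> E"
  shows "out_pmf (measure_pmf (ook E p)) k
    = (if k = 0 then 1 - p + p * exp (- (E / p)) else p * poi (E / p) k)"
  unfolding out_pmf_def using assms by (simp add: integral_ook poi_0_left) (simp add: poi_def)

lemma info_ook:
  assumes p: "0 < p" "p \<le> 1" and E: "0 < E"
  defines "P0 \<equiv> 1 - p + p * exp (- (E / p))"
  shows "info (measure_pmf (ook E p))
    = P0 * ln (1 / P0) - E * exp (- (E / p)) + p * (1 - exp (- (E / p))) * ln (1 / p)"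
proof -
  define A where "A = E / p"
  have A: "0 < A"
    using p E by (simp add: A_def)
  have "0 < p * exp (- A)"
    using p by simp
  then have P0: "0 < P0"
    using p unfolding P0_def A_def by linarith
  have out: "out_pmf (measure_pmf (ook E p)) k = (if k = 0 then P0 else p * poi A k)" for k
    using out_pmf_ook[OF p] E by (simp add: A_def P0_def)
  define t where "t k = div_term (poi A k) (out_pmf (measure_pmf (ook E p)) k)" for k
  have "t (Suc n) = poi A (Suc n) * ln (1 / p)" for n
    using poi_pos[OF A] p by (simp add: t_def div_term_def out ln_div)
  then have "(\<lambda>n. t (Suc n)) sums ((1 - exp (- A)) * ln (1 / p))"
    using sums_mult2[OF sums_poi_Suc] by simp
  then have "t sums ((1 - exp (- A)) * ln (1 / p) + exp (- A) * (- A + ln (1 / P0)))"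
    using P0 by (subst (asm) sums_Suc_iff) (simp add: t_def div_term_def out poi_def ln_div)
  moreover have "(\<lambda>k. div_term (poi 0 k) (out_pmf (measure_pmf (ook E p)) k)) sums ln (1 / P0)"
  proof -
    have "(\<lambda>k. div_term (poi 0 k) (out_pmf (measure_pmf (ook E p)) k))
        = (\<lambda>k. if k = 0 then ln (1 / P0) else 0)"
      by (auto simp: div_term_def poi_0_left out)
    then show ?thesis
      using sums_single[of 0 "\<lambda>_. ln (1 / P0)"] by simp
  qed
  ultimately have "info (measure_pmf (ook E p))
      = p * ((1 - exp (- A)) * ln (1 / p) + exp (- A) * (- A + ln (1 / P0))) + (1 - p) * ln (1 / P0)"
    unfolding info_def using p E by (simp add: integral_ook A_def t_def[abs_def] sums_iff)
  also have "\<dots> = P0 * ln (1 / P0) - E * exp (- A) + p * (1 - exp (- A)) * ln (1 / p)"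
    using p by (simp add: P0_def A_def algebra_simps)
  finally show ?thesis
    by (simp add: A_def)
qed

lemma info_ook_ge:
  assumes p: "0 < p" "p \<le> 1" and E: "0 < E"
  shows "p * (1 - exp (- (E / p))) * ln (1 / p) - E \<le> info (measure_pmf (ook E p))"
proof -
  define P0 where "P0 = 1 - p + p * exp (- (E / p))"
  have "0 < p * exp (- (E / p))" "p * exp (- (E / p)) \<le> p"
    using p E by (simp_all add: mult_le_cancel_left1)
  then have "0 < P0" "P0 \<le> 1"
    using p unfolding P0_def by linarith+
  then have "0 \<le> P0 * ln (1 / P0)"
    by simp
  moreover have "E * exp (- (E / p)) \<le> E"
    using p E by (simp add: mult_le_cancel_left1)
  ultimately show ?thesis
    using info_ook[OF p E] by (simp add: P0_def)
qed

lemma pstar_bounds: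
  fixes E :: real
  assumes E: "0 < E" "E \<le> exp (- 2)"
  shows "0 < E / 2 * ln (1 / E)" "E / 2 * ln (1 / E) \<le> 1"
proof -
  have L: "2 \<le> ln (1 / E)"
    using ln_inverse_ge[of E 2] E by simp
  then show "0 < E / 2 * ln (1 / E)"
    using E by (intro mult_pos_pos; linarith)
  have "E * ln (1 / E) \<le> E * (1 / E - 1)"
    using E by (intro mult_left_mono ln_le_minus_one) auto
  also have "\<dots> \<le> 1"
    using E by (simp add: field_simps)
  finally show "E / 2 * ln (1 / E) \<le> 1"
    using L by simp
qed

lemma info_ook_pstar_ge:
  assumes E: "0 < E" "E \<le> exp (- 2)"
  shows "E * ln (1 / E) - E * ln (ln (1 / E)) - 2 * E
    \<le> info (measure_pmf (ook E (E / 2 * ln (1 / E))))"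
proof -
  define L where "L = ln (1 / E)"
  define p where "p = E / 2 * L"
  have L: "2 \<le> L"
    unfolding L_def using ln_inverse_ge[of E 2] E by simp
  have p: "0 < p" "p \<le> 1"
    using pstar_bounds[OF E] by (simp_all add: p_def L_def)
  have "p * (2 / L - (2 / L)\<^sup>2 / 2) \<le> p * (1 - exp (- (2 / L)))"
    using one_minus_exp_ge[of "2 / L"] L p by (intro mult_left_mono) auto
  moreover have "p * (2 / L - (2 / L)\<^sup>2 / 2) = E - E / L"
    using L by (simp add: p_def power2_eq_square field_simps)
  moreover have "E / p = 2 / L"
    using E L by (simp add: p_def)
  ultimately have detect: "E - E / L \<le> p * (1 - exp (- (E / p)))"
    by simp
  have "ln (1 / p) = ln 2 - (ln E + ln L)"
    using E L by (simp add: p_def ln_div ln_mult)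
  moreover have "ln E = - L"
    using E by (simp add: L_def ln_div)
  ultimately have ln_p: "ln (1 / p) = L + ln 2 - ln L"
    by simp
  have "(E - E / L) * ln (1 / p) \<le> p * (1 - exp (- (E / p))) * ln (1 / p)"
    using detect p by (intro mult_right_mono) auto
  moreover have "(E - E / L) * ln (1 / p)
      = E * L - E * ln L - E + (E * ln 2 * (1 - 1 / L) + E * ln L / L)"
    using L by (simp add: ln_p field_simps)
  moreover have "0 \<le> E * ln 2 * (1 - 1 / L) + E * ln L / L"
    using E L by (intro add_nonneg_nonneg mult_nonneg_nonneg) auto
  ultimately have "E * L - E * ln L - 2 * E \<le> info (measure_pmf (ook E p))"
    using info_ook_ge[OF p E(1)] by linarith
  then show ?thesis
    by (simp add: p_def L_def)
qed

section \<open>Capacity asymptotics\<close>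

lemma info_distr_measure_pmf: "info (distr (measure_pmf q) borel id) = info (measure_pmf q)"
proof -
  have [measurable]: "(\<lambda>s::complex. poi ((cmod s)\<^sup>2) k) \<in> borel_measurable borel" for k
    unfolding poi_def by measurable
  have "out_pmf (distr (measure_pmf q) borel id) = out_pmf (measure_pmf q)"
    unfolding out_pmf_def by (auto simp: integral_distr)
  moreover have "(\<lambda>s::complex. \<Sum>k. div_term (poi ((cmod s)\<^sup>2) k) (out_pmf (measure_pmf q) k))
      \<in> borel_measurable borel"
    unfolding div_term_def by measurable
  ultimately show ?thesis
    unfolding info_def by (simp add: integral_distr)
qed

lemma admissible_distr_measure_pmf:
  assumes "finite (set_pmf q)" "(\<integral>s. (cmod s)\<^sup>2 \<partial>measure_pmf q) \<le> E"
  shows "admissible E (distr (measure_pmf q) borel id)"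
  unfolding admissible_def using assms
  by (auto intro: prob_space.prob_space_distr simp: prob_space_measure_pmf integrable_distr_eq
      integral_distr integrable_measure_pmf_finite)

lemma C_DD_bounds:
  assumes E: "0 < E" "E \<le> exp (- 2)"
  shows "info (measure_pmf (ook E (E / 2 * ln (1 / E)))) \<le> C_DD E"
    and "C_DD E \<le> E * (ln (1 / E) - ln (ln (1 / E)) + 3 + ln 2)"
proof -
  define p where "p = E / 2 * ln (1 / E)"
  define B where "B = E * (ln (1 / E) - ln (ln (1 / E)) + 3 + ln 2)"
  have E1: "E \<le> exp (- 1)"
    using E(2) by (simp add: order_trans)
  have p: "0 < p" "p \<le> 1"
    using pstar_bounds[OF E] by (simp_all add: p_def)
  have "finite (set_pmf (ook E p))"
    unfolding ook_def by simp
  moreover have "(\<integral>s. (cmod s)\<^sup>2 \<partial>measure_pmf (ook E p)) = E"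
    using p E by (simp add: integral_ook)
  ultimately have adm: "admissible E (distr (measure_pmf (ook E p)) borel id)"
    by (intro admissible_distr_measure_pmf) auto
  have upper: "info M \<le> B" if "admissible E M" for M
    unfolding B_def using info_le_of_admissible[OF that E(1) E1] .
  then have "bdd_above (info ` {M. admissible E M})"
    by (intro bdd_aboveI[of _ B]) auto
  then have "info (distr (measure_pmf (ook E p)) borel id) \<le> C_DD E"
    unfolding C_DD_def using adm by (intro cSup_upper) auto
  then show "info (measure_pmf (ook E (E / 2 * ln (1 / E)))) \<le> C_DD E"
    by (simp add: info_distr_measure_pmf p_def)
  show "C_DD E \<le> B"
    unfolding C_DD_def using adm upper by (intro cSup_least) auto
qed

lemma C_DD_error_bounds:
  assumes E: "0 < E" "E \<le> exp (- 2)"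
  shows "\<bar>C_DD E - info (measure_pmf (ook E (E / 2 * ln (1 / E))))\<bar> \<le> 6 * E"
    and "\<bar>C_DD E - (E * ln (1 / E) - E * ln (ln (1 / E)))\<bar> \<le> 4 * E"
proof -
  have "E * ln 2 \<le> E"
    using E ln_2_less_1 by (simp add: mult_le_cancel_left1)
  moreover have "C_DD E \<le> E * ln (1 / E) - E * ln (ln (1 / E)) + 3 * E + E * ln 2"
    using C_DD_bounds(2)[OF E] by (simp add: algebra_simps)
  ultimately show "\<bar>C_DD E - info (measure_pmf (ook E (E / 2 * ln (1 / E))))\<bar> \<le> 6 * E"
    and "\<bar>C_DD E - (E * ln (1 / E) - E * ln (ln (1 / E)))\<bar> \<le> 4 * E"
    using C_DD_bounds(1)[OF E] info_ook_pstar_ge[OF E] E unfolding abs_le_iff by linarith+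
qed

theorem lemma3:
  "\<exists>pstar :: real \<Rightarrow> real.
     (\<forall>\<^sub>F E in at_right 0. 0 < pstar E \<and> pstar E \<le> 1) \<and>
     ((\<lambda>E. pstar E / ((E / 2) * ln (1 / E))) \<longlongrightarrow> 1) (at_right 0) \<and>
     (\<lambda>E. C_DD E - info (measure_pmf (ook E (pstar E)))) \<in> O[at_right 0](\<lambda>E. E) \<and>
     (\<lambda>E. C_DD E - (E * ln (1 / E) - E * ln (ln (1 / E)))) \<in> O[at_right 0](\<lambda>E. E)"
proof (intro exI[of _ "\<lambda>E. E / 2 * ln (1 / E)"] conjI)
  have small: "\<forall>\<^sub>F E in at_right 0. 0 < E \<and> E \<le> exp (- 2 :: real)"
    by (rule eventually_at_rightI[of 0 "exp (- 2)"]) auto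
  then show "\<forall>\<^sub>F E in at_right 0. 0 < E / 2 * ln (1 / E) \<and> E / 2 * ln (1 / E) \<le> (1 :: real)"
    by eventually_elim (use pstar_bounds in blast)
  have "\<forall>\<^sub>F E in at_right 0. E / 2 * ln (1 / E) / (E / 2 * ln (1 / E)) = (1 :: real)"
    using small by eventually_elim (use pstar_bounds in auto)
  then show "((\<lambda>E. E / 2 * ln (1 / E) / (E / 2 * ln (1 / E))) \<longlongrightarrow> (1 :: real)) (at_right 0)"
    by (rule tendsto_eventually)
  have "\<forall>\<^sub>F E in at_right 0.
      norm (C_DD E - info (measure_pmf (ook E (E / 2 * ln (1 / E))))) \<le> 6 * norm E"
    using small by eventually_elim (use C_DD_error_bounds in auto)
  then show "(\<lambda>E. C_DD E - info (measure_pmf (ook E (E / 2 * ln (1 / E))))) \<in> O[at_right 0](\<lambda>E. E)"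
    by (rule bigoI)
  have "\<forall>\<^sub>F E in at_right 0.
      norm (C_DD E - (E * ln (1 / E) - E * ln (ln (1 / E)))) \<le> 4 * norm E"
    using small by eventually_elim (use C_DD_error_bounds in auto)
  then show "(\<lambda>E. C_DD E - (E * ln (1 / E) - E * ln (ln (1 / E)))) \<in> O[at_right 0](\<lambda>E. E)"
    by (rule bigoI)
qed

end
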